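(* Let $G$ be a group. The following are equivalent: (1) every transitive function $u:\rho\to G$ is trivial; (2) every transitive function $w:\le\;\to G$ on the partial order $\le$ of $\mathcal C$ is trivial; (3) for every function $v:\Gamma_1\to G$ such that $v(a_1)\cdots v(a_r)=v(b_1)\cdots v(b_s)$ for all paths $a_1\cdots a_r$ and $b_1\cdots b_s$ in $\Gamma$ with the same start vertex and the same end vertex, there exists $f:\Gamma_0\to G$ with $v(a)=f(s(a))f(t(a))^{-1}$ for every $a\in\Gamma_1$.
   Context: $\rho$ is a preorder on $\{1,\dots,n\}$; $i\sim j$ iff $i\rho j$ and $j\rho i$; $\mathcal C$ is the set of classes, $\hat i$ the class of $i$, with partial order $\hat i\le\hat j$ iff $i\rho j$. For a preorder (or partial order) $\pi$ on a set $X$, a transitive function on $\pi$ with values in a group $G$ is a map $u:\pi\to G$ (defined on pairs $(x,y)$ with $x\pi y$) such that $u(x,y)u(y,z)=u(x,z)$ whenever $x\pi y$, $y\pi z$; it is trivial if there are $g_x\in G$ ($x\in X$) with $u(x,y)=g_xg_y^{-1}$ for all $x\pi y$. $\Gamma=(\Gamma_0,\Gamma_1)$ is the directed graph with vertex set $\Gamma_0=\mathcal C$ and an arrow $a$ from $\alpha$ to $\beta$ (written $s(a)=\alpha$, $t(a)=\beta$) iff $\alpha<\beta$ and there is no $\gamma$ with $\alpha<\gamma<\beta$ (the Hasse diagram). A path $a_1\cdots a_r$ means arrows with $t(a_i)=s(a_{i+1})$. *)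

theory Defs
  imports Main "HOL-Algebra.Group"
begin

definition transitive_fun :: "('g,'b) monoid_scheme \<Rightarrow> ('x \<times> 'x) set \<Rightarrow> ('x \<Rightarrow> 'x \<Rightarrow> 'g) \<Rightarrow> bool" where
  "transitive_fun G pi u \<longleftrightarrow>
     (\<forall>x y. (x, y) \<in> pi \<longrightarrow> u x y \<in> carrier G) \<and>
     (\<forall>x y z. (x, y) \<in> pi \<longrightarrow> (y, z) \<in> pi \<longrightarrow> u x y \<otimes>\<^bsub>G\<^esub> u y z = u x z)"

definition trivial_fun :: "('g,'b) monoid_scheme \<Rightarrow> 'x set \<Rightarrow> ('x \<times> 'x) set \<Rightarrow> ('x \<Rightarrow> 'x \<Rightarrow> 'g) \<Rightarrow> bool" where
  "trivial_fun G X pi u \<longleftrightarrow>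
     (\<exists>g. (\<forall>x\<in>X. g x \<in> carrier G) \<and>
          (\<forall>x y. (x, y) \<in> pi \<longrightarrow> u x y = g x \<otimes>\<^bsub>G\<^esub> inv\<^bsub>G\<^esub> (g y)))"

definition cls :: "nat \<Rightarrow> (nat \<times> nat) set \<Rightarrow> nat \<Rightarrow> nat set" where
  "cls n rho i = {j \<in> {1..n}. (i, j) \<in> rho \<and> (j, i) \<in> rho}"

definition classesC :: "nat \<Rightarrow> (nat \<times> nat) set \<Rightarrow> nat set set" where
  "classesC n rho = image (cls n rho) {1..n}"

definition cls_le :: "nat \<Rightarrow> (nat \<times> nat) set \<Rightarrow> (nat set \<times> nat set) set" where
  "cls_le n rho = {(cls n rho i, cls n rho j) | i j. i \<in> {1..n} \<and> j \<in> {1..n} \<and> (i, j) \<in> rho}"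

definition hasse_arrows :: "('c \<times> 'c) set \<Rightarrow> ('c \<times> 'c) set" where
  "hasse_arrows L = {(a, b). (a, b) \<in> L \<and> a \<noteq> b \<and>
      \<not> (\<exists>c. (a, c) \<in> L \<and> a \<noteq> c \<and> (c, b) \<in> L \<and> c \<noteq> b)}"

definition is_path :: "('c \<times> 'c) set \<Rightarrow> ('c \<times> 'c) list \<Rightarrow> bool" where
  "is_path E as \<longleftrightarrow> as \<noteq> [] \<and> set as \<subseteq> E \<and>
     (\<forall>i. Suc i < length as \<longrightarrow> snd (as ! i) = fst (as ! Suc i))"

definition path_start :: "('c \<times> 'c) list \<Rightarrow> 'c" where
  "path_start as = fst (hd as)"

definition path_end :: "('c \<times> 'c) list \<Rightarrow> 'c" where
  "path_end as = snd (last as)"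

definition path_prod :: "('g,'b) monoid_scheme \<Rightarrow> ('c \<times> 'c \<Rightarrow> 'g) \<Rightarrow> ('c \<times> 'c) list \<Rightarrow> 'g" where
  "path_prod G v as = foldr (\<lambda>a acc. v a \<otimes>\<^bsub>G\<^esub> acc) as \<one>\<^bsub>G\<^esub>"

end

theory Submission
  imports Defs
begin

text \<open>On a preorder, a transitive function is, up to a coboundary, the same as one on the
  quotient poset: compose with the class map in one direction and with a choice of class
  representatives in the other, correcting by the values between a point and its representative.
  On a finite poset, \<open>x < y\<close> holds iff there is a path from \<open>x\<close> to \<open>y\<close> in the Hasse
  diagram; hence a transitive function is the same as a path-independent labelling of the arrows
  (its value on \<open>x < y\<close> being the product along any such path), and it is trivial iff its
  labelling is a coboundary on the arrows, by telescoping along paths.\<close>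

lemma is_path_Cons:
  "is_path E (a # q) \<longleftrightarrow> a \<in> E \<and> (q = [] \<or> is_path E q \<and> snd a = fst (hd q))"
proof (cases q)
  case (Cons b q')
  have "(\<forall>i. Suc i < length (a # q) \<longrightarrow> snd ((a # q) ! i) = fst ((a # q) ! Suc i))
     \<longleftrightarrow> snd a = fst b \<and> (\<forall>i. Suc i < length q \<longrightarrow> snd (q ! i) = fst (q ! Suc i))"
    unfolding Cons by (auto simp: less_Suc_eq_0_disj nth_Cons split: nat.split)
  then show ?thesis unfolding is_path_def Cons by auto
qed (simp add: is_path_def)

lemma not_is_path_Nil [simp]: "\<not> is_path E []"
  by (simp add: is_path_def)

lemma is_path_subset: "is_path E p \<Longrightarrow> set p \<subseteq> E"
  by (simp add: is_path_def)

lemma path_start_Cons [simp]: "path_start (a # q) = fst a"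
  by (simp add: path_start_def)

lemma path_end_Cons [simp]: "path_end (a # q) = (if q = [] then snd a else path_end q)"
  by (simp add: path_end_def)

lemma path_prod_Nil [simp]: "path_prod G v [] = \<one>\<^bsub>G\<^esub>"
  by (simp add: path_prod_def)

lemma path_prod_Cons [simp]: "path_prod G v (a # q) = v a \<otimes>\<^bsub>G\<^esub> path_prod G v q"
  by (simp add: path_prod_def)

lemma path_append:
  assumes "is_path E p" "is_path E q" "path_end p = path_start q"
  shows "is_path E (p @ q) \<and> path_start (p @ q) = path_start p \<and> path_end (p @ q) = path_end q"
  using assms
proof (induction p)
  case (Cons a p)
  then show ?case
    by (cases "p = []") (auto simp: is_path_Cons path_start_def path_end_def)
qed simp

lemma trancl_iff_path:
  "(x, y) \<in> E\<^sup>+ \<longleftrightarrow> (\<exists>p. is_path E p \<and> path_start p = x \<and> path_end p = y)"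
proof
  assume "(x, y) \<in> E\<^sup>+"
  then show "\<exists>p. is_path E p \<and> path_start p = x \<and> path_end p = y"
  proof (induction rule: converse_trancl_induct)
    case (base x)
    then show ?case by (intro exI[of _ "[(x, y)]"]) (simp add: is_path_Cons)
  next
    case (step x z)
    then obtain q where "is_path E q" "path_start q = z" "path_end q = y" by blast
    with step.hyps(1) show ?case
      by (intro exI[of _ "(x, z) # q"]) (auto simp: is_path_Cons path_start_def)
  qed
next
  assume "\<exists>p. is_path E p \<and> path_start p = x \<and> path_end p = y"
  then obtain p where "is_path E p" "path_start p = x" "path_end p = y" by blast
  then show "(x, y) \<in> E\<^sup>+"
  proof (induction p arbitrary: x)
    case (Cons a q)
    then show ?case
      by (cases a; cases "q = []")
        (auto simp: is_path_Cons path_start_def intro: trancl_into_trancl2)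
  qed simp
qed

context monoid
begin

lemma path_prod_closed: "\<forall>a\<in>set p. v a \<in> carrier G \<Longrightarrow> path_prod G v p \<in> carrier G"
  by (induction p) auto

lemma path_prod_append:
  assumes "\<forall>a\<in>set p. v a \<in> carrier G" "\<forall>a\<in>set q. v a \<in> carrier G"
  shows "path_prod G v (p @ q) = path_prod G v p \<otimes> path_prod G v q"
  using assms by (induction p) (auto simp: path_prod_closed m_assoc)

end

lemma trivial_fun_eq_onI:
  assumes "trivial_fun G C L w'" "\<And>x y. (x, y) \<in> L \<Longrightarrow> w x y = w' x y"
  shows "trivial_fun G C L w"
  using assms unfolding trivial_fun_def by simp

lemma trivial_fun_subset: "R \<subseteq> L \<Longrightarrow> trivial_fun G C L w \<Longrightarrow> trivial_fun G C R w"
  unfolding trivial_fun_def by blast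

lemma trivial_fun_comp:
  assumes "trivial_fun G A R u" "r ` C \<subseteq> A" "\<And>x y. (x, y) \<in> L \<Longrightarrow> (r x, r y) \<in> R"
  shows "trivial_fun G C L (\<lambda>x y. u (r x) (r y))"
proof -
  obtain g where "\<forall>x\<in>A. g x \<in> carrier G"
    and "\<forall>x y. (x, y) \<in> R \<longrightarrow> u x y = g x \<otimes>\<^bsub>G\<^esub> inv\<^bsub>G\<^esub> g y"
    using assms(1) unfolding trivial_fun_def by blast
  then show ?thesis
    using assms(2,3) unfolding trivial_fun_def by (intro exI[of _ "g \<circ> r"]) auto
qed

lemma transitive_fun_comp:
  assumes "transitive_fun G L w" "\<And>x y. (x, y) \<in> R \<Longrightarrow> (r x, r y) \<in> L"
  shows "transitive_fun G R (\<lambda>x y. w (r x) (r y))"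
  using assms unfolding transitive_fun_def by blast

lemma transitive_fun_closed: "transitive_fun G L w \<Longrightarrow> (x, y) \<in> L \<Longrightarrow> w x y \<in> carrier G"
  unfolding transitive_fun_def by blast

lemma transitive_fun_mult:
  "transitive_fun G L w \<Longrightarrow> (x, y) \<in> L \<Longrightarrow> (y, z) \<in> L \<Longrightarrow> w x y \<otimes>\<^bsub>G\<^esub> w y z = w x z"
  unfolding transitive_fun_def by blast

context group
begin

lemma transitive_fun_refl_one:
  assumes "transitive_fun G L w" "(x, x) \<in> L"
  shows "w x x = \<one>"
proof -
  have "w x x \<in> carrier G" using assms by (rule transitive_fun_closed)
  moreover have "w x x \<otimes> w x x = w x x" using assms by (simp add: transitive_fun_mult)
  ultimately show ?thesis by (simp add: r_cancel_one)
qed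

lemma transitive_fun_inv:
  assumes "transitive_fun G L w" "trans L" "(x, y) \<in> L" "(y, x) \<in> L"
  shows "inv (w x y) = w y x"
proof (rule inv_equality)
  have "(y, y) \<in> L" using assms(2-4) by (meson transD)
  then show "w y x \<otimes> w x y = \<one>"
    using assms by (simp add: transitive_fun_mult transitive_fun_refl_one)
qed (simp_all add: transitive_fun_closed[OF assms(1)] assms(3,4))

text \<open>If \<open>h\<close> trivialises \<open>u\<close> composed with \<open>s\<close>, then \<open>x \<mapsto> u x (s x) \<otimes> h x\<close>
  trivialises \<open>u\<close>.\<close>
lemma trivial_fun_if_trivial_on_representatives:
  assumes u: "transitive_fun G R u" and R: "preorder_on A R"
    and s: "\<And>x. x \<in> A \<Longrightarrow> (x, s x) \<in> R \<and> (s x, x) \<in> R"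
    and triv: "trivial_fun G A R (\<lambda>x y. u (s x) (s y))"
  shows "trivial_fun G A R u"
proof -
  have RA: "R \<subseteq> A \<times> A" and tR: "trans R" using R by (auto simp: preorder_on_def)
  obtain h where h: "\<forall>x\<in>A. h x \<in> carrier G"
    and uh: "\<And>x y. (x, y) \<in> R \<Longrightarrow> u (s x) (s y) = h x \<otimes> inv (h y)"
    using triv unfolding trivial_fun_def by blast
  define g where "g x = u x (s x) \<otimes> h x" for x
  have uc: "u x y \<in> carrier G" if "(x, y) \<in> R" for x y
    using u that by (rule transitive_fun_closed)
  show ?thesis
    unfolding trivial_fun_def
  proof (intro exI conjI ballI allI impI)
    show "g x \<in> carrier G" if "x \<in> A" for x
      using that s h uc by (simp add: g_def)
  next
    fix x y assume xy: "(x, y) \<in> R"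
    then have x: "x \<in> A" and y: "y \<in> A" using RA by auto
    have xs: "(x, s x) \<in> R" "(s x, x) \<in> R" and ys: "(y, s y) \<in> R" "(s y, y) \<in> R"
      using s x y by auto
    have ss: "(s x, s y) \<in> R" using xs(2) xy ys(1) tR by (meson transD)
    have xsy: "(x, s y) \<in> R" using xs(1) ss tR by (meson transD)
    have "u x y = u x (s x) \<otimes> u (s x) (s y) \<otimes> u (s y) y"
      using transitive_fun_mult[OF u xs(1) ss] transitive_fun_mult[OF u xsy ys(2)] by simp
    also have "\<dots> = u x (s x) \<otimes> (h x \<otimes> inv (h y)) \<otimes> inv (u y (s y))"
      using uh[OF xy] transitive_fun_inv[OF u tR ys] by simp
    also have "\<dots> = g x \<otimes> inv (g y)"
      using h x y uc xs ys by (simp add: g_def inv_mult_group m_assoc)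
    finally show "u x y = g x \<otimes> inv (g y)" .
  qed
qed

lemma path_prod_coboundary:
  assumes "is_path E p"
    and "\<And>a. a \<in> E \<Longrightarrow> f (fst a) \<in> carrier G \<and> f (snd a) \<in> carrier G
                        \<and> v a = f (fst a) \<otimes> inv (f (snd a))"
  shows "path_prod G v p = f (path_start p) \<otimes> inv (f (path_end p))"
  using assms(1)
proof (induction p)
  case (Cons a q)
  have a: "f (fst a) \<in> carrier G" "f (snd a) \<in> carrier G" "v a = f (fst a) \<otimes> inv (f (snd a))"
    using Cons.prems assms(2) by (auto simp: is_path_Cons)
  show ?case
  proof (cases "q = []")
    case False
    have q: "is_path E q" and aq: "snd a = path_start q"
      using Cons.prems False by (auto simp: is_path_Cons path_start_def)
    then have "path_prod G v q = f (snd a) \<otimes> inv (f (path_end q))"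
      using Cons.IH by simp
    moreover have "f (path_end q) \<in> carrier G"
      using assms(2)[of "last q"] is_path_subset[OF q] last_in_set[OF False]
      by (auto simp: path_end_def)
    ultimately show ?thesis using a False by (simp add: m_assoc[symmetric]) (simp add: m_assoc)
  qed (use a in simp)
qed simp

end

lemma (in monoid) path_prod_transitive_fun:
  assumes "is_path E p" "E \<subseteq> L" "trans L" "transitive_fun G L w"
  shows "path_prod G (\<lambda>a. w (fst a) (snd a)) p = w (path_start p) (path_end p)"
  using assms(1)
proof (induction p)
  case (Cons a q)
  have aL: "(fst a, snd a) \<in> L" using Cons.prems assms(2) by (auto simp: is_path_Cons)
  show ?case
  proof (cases "q = []")
    case False
    have q: "is_path E q" and aq: "snd a = path_start q"
      using Cons.prems False unfolding is_path_Cons path_start_def by simp_all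
    have "(path_start q, path_end q) \<in> E\<^sup>+"
      using q by (auto simp: trancl_iff_path)
    then have "(snd a, path_end q) \<in> L"
      using aq trancl_mono_subset[OF assms(2)] assms(3) by auto
    then show ?thesis
      using Cons.IH[OF q] aq False transitive_fun_mult[OF assms(4) aL] by simp
  qed (simp add: transitive_fun_closed[OF assms(4) aL])
qed simp

lemma hasse_arrows_subset_Diff_Id: "hasse_arrows L \<subseteq> L - Id"
  unfolding hasse_arrows_def by auto

lemma hasse_arrows_subset: "hasse_arrows L \<subseteq> L"
  unfolding hasse_arrows_def by auto

lemma trancl_hasse_arrows:
  assumes fin: "finite L" and po: "partial_order_on C L"
  shows "(hasse_arrows L)\<^sup>+ = L - Id"
proof
  have "trans (L - Id)" using po by (simp add: partial_order_on_def preorder_on_def trans_diff_Id)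
  then show "(hasse_arrows L)\<^sup>+ \<subseteq> L - Id"
    using trancl_mono_subset[OF hasse_arrows_subset_Diff_Id[of L]] by simp
next
  have tr: "trans L" and an: "antisym L" and LC: "L \<subseteq> C \<times> C" and rf: "refl_on C L"
    using po by (simp_all add: partial_order_on_def preorder_on_def)
  have refl_ends: "(a, a) \<in> L \<and> (b, b) \<in> L" if "(a, b) \<in> L" for a b
    using that LC rf by (auto simp: refl_on_def)
  define between where "between a b = {c. (a, c) \<in> L \<and> (c, b) \<in> L}" for a b
  have fin_between: "finite (between a b)" for a b
  proof (rule finite_subset)
    show "between a b \<subseteq> snd ` L" unfolding between_def by force
  qed (use fin in simp)
  have "(a, b) \<in> (hasse_arrows L)\<^sup>+" if "(a, b) \<in> L" "a \<noteq> b" for a b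
    using that
  proof (induction "card (between a b)" arbitrary: a b rule: less_induct)
    case less
    show ?case
    proof (cases "(a, b) \<in> hasse_arrows L")
      case False
      then obtain c where ac: "(a, c) \<in> L" "a \<noteq> c" and cb: "(c, b) \<in> L" "c \<noteq> b"
        using less.prems unfolding hasse_arrows_def by auto
      have "between a c \<subset> between a b"
      proof
        show "between a c \<subseteq> between a b" using cb tr by (auto simp: between_def dest: transD)
        have "b \<notin> between a c" using cb an by (auto simp: between_def dest: antisymD)
        then show "between a c \<noteq> between a b" using less.prems refl_ends by (auto simp: between_def)
      qed
      moreover have "between c b \<subset> between a b"
      proof
        show "between c b \<subseteq> between a b" using ac tr by (auto simp: between_def dest: transD)
        have "a \<notin> between c b" using ac an by (auto simp: between_def dest: antisymD)
        then show "between c b \<noteq> between a b" using less.prems refl_ends by (auto simp: between_def)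
      qed
      ultimately have "(a, c) \<in> (hasse_arrows L)\<^sup>+" "(c, b) \<in> (hasse_arrows L)\<^sup>+"
        using less.hyps psubset_card_mono[OF fin_between] ac cb by blast+
      then show ?thesis by (rule trancl_trans)
    qed auto
  qed
  then show "L - Id \<subseteq> (hasse_arrows L)\<^sup>+" by auto
qed

definition path_independent ::
    "('g, 'b) monoid_scheme \<Rightarrow> ('c \<times> 'c) set \<Rightarrow> ('c \<times> 'c \<Rightarrow> 'g) \<Rightarrow> bool" where
  "path_independent G E v \<longleftrightarrow> (\<forall>a\<in>E. v a \<in> carrier G) \<and>
     (\<forall>p q. is_path E p \<longrightarrow> is_path E q \<longrightarrow> path_start p = path_start q
        \<longrightarrow> path_end p = path_end q \<longrightarrow> path_prod G v p = path_prod G v q)"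

lemma trivial_fun_curry_iff:
  "trivial_fun G C E (curry v) \<longleftrightarrow>
     (\<exists>f. (\<forall>x\<in>C. f x \<in> carrier G) \<and> (\<forall>a\<in>E. v a = f (fst a) \<otimes>\<^bsub>G\<^esub> inv\<^bsub>G\<^esub> f (snd a)))"
  unfolding trivial_fun_def by (simp add: Ball_def split_paired_All)

lemma (in monoid) path_independent_transitive_fun:
  assumes "transitive_fun G L w" "trans L"
  shows "path_independent G (hasse_arrows L) (\<lambda>a. w (fst a) (snd a))"
  unfolding path_independent_def
proof (intro conjI ballI allI impI)
  show "w (fst a) (snd a) \<in> carrier G" if "a \<in> hasse_arrows L" for a
    using that hasse_arrows_subset transitive_fun_closed[OF assms(1)] by (cases a) auto
  fix p q assume "is_path (hasse_arrows L) p" "is_path (hasse_arrows L) q"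
    and "path_start p = path_start q" "path_end p = path_end q"
  then show "path_prod G (\<lambda>a. w (fst a) (snd a)) p = path_prod G (\<lambda>a. w (fst a) (snd a)) q"
    using path_prod_transitive_fun[OF _ hasse_arrows_subset assms(2,1)] by simp
qed

lemma (in group) path_independent_extends_to_transitive_fun:
  assumes fin: "finite L" and po: "partial_order_on C L"
    and v: "path_independent G (hasse_arrows L) v"
  obtains w where "transitive_fun G L w" "\<And>a. a \<in> hasse_arrows L \<Longrightarrow> w (fst a) (snd a) = v a"
proof -
  let ?E = "hasse_arrows L"
  have tr: "trans L" and an: "antisym L" using po by (auto simp: partial_order_on_def preorder_on_def)
  have vc: "\<forall>a\<in>?E. v a \<in> carrier G"
    and vi: "\<And>p q. is_path ?E p \<Longrightarrow> is_path ?E q \<Longrightarrow> path_start p = path_start q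
               \<Longrightarrow> path_end p = path_end q \<Longrightarrow> path_prod G v p = path_prod G v q"
    using v unfolding path_independent_def by blast+
  define P where "P x y = (SOME p. is_path ?E p \<and> path_start p = x \<and> path_end p = y)" for x y
  have P: "is_path ?E (P x y) \<and> path_start (P x y) = x \<and> path_end (P x y) = y"
    if "(x, y) \<in> L" "x \<noteq> y" for x y
  proof -
    have "(x, y) \<in> (hasse_arrows L)\<^sup>+" using that trancl_hasse_arrows[OF fin po] by simp
    then show ?thesis unfolding P_def trancl_iff_path by (rule someI_ex)
  qed
  define w where "w x y = (if x = y then \<one> else path_prod G v (P x y))" for x y
  have Pc: "\<forall>a\<in>set (P x y). v a \<in> carrier G" if "(x, y) \<in> L" "x \<noteq> y" for x y
    using P[OF that] vc is_path_subset by blast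
  have wc: "w x y \<in> carrier G" if "(x, y) \<in> L" for x y
    unfolding w_def using Pc[OF that] by (auto intro: path_prod_closed)
  have w_refl: "w x x = \<one>" for x by (simp add: w_def)
  have "transitive_fun G L w"
    unfolding transitive_fun_def
  proof (intro conjI allI impI)
    fix x y z assume xy: "(x, y) \<in> L" and yz: "(y, z) \<in> L"
    consider "x = y" | "y = z" | "x \<noteq> y" "y \<noteq> z" by blast
    then show "w x y \<otimes> w y z = w x z"
    proof cases
      case 3
      have xz: "(x, z) \<in> L" using tr xy yz by (rule transD)
      have xz': "x \<noteq> z" using antisymD[OF an xy] yz 3 by blast
      have "w x y \<otimes> w y z = path_prod G v (P x y @ P y z)"
        using 3 Pc[OF xy] Pc[OF yz] by (simp add: w_def path_prod_append)
      also have "\<dots> = path_prod G v (P x z)"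
      proof (rule vi)
        show "is_path ?E (P x y @ P y z)" "path_start (P x y @ P y z) = path_start (P x z)"
          "path_end (P x y @ P y z) = path_end (P x z)"
          using path_append[of ?E "P x y" "P y z"] P[OF xy 3(1)] P[OF yz 3(2)] P[OF xz xz'] by simp_all
      qed (use P[OF xz xz'] in simp)
      finally show ?thesis using xz' by (simp add: w_def)
    qed (use wc[OF xy] wc[OF yz] w_refl in auto)
  qed (rule wc)
  moreover have "w (fst a) (snd a) = v a" if a: "a \<in> ?E" for a
  proof -
    have aL: "(fst a, snd a) \<in> L" "fst a \<noteq> snd a" using a unfolding hasse_arrows_def by auto
    have "is_path ?E [a]" using a by (simp add: is_path_Cons)
    then have "path_prod G v (P (fst a) (snd a)) = path_prod G v [a]"
      using P[OF aL] by (intro vi) simp_all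
    then show ?thesis using aL vc a by (simp add: w_def)
  qed
  ultimately show ?thesis using that by blast
qed

lemma (in group) trivial_fun_if_trivial_on_hasse_arrows:
  assumes fin: "finite L" and po: "partial_order_on C L" and w: "transitive_fun G L w"
    and triv: "trivial_fun G C (hasse_arrows L) w"
  shows "trivial_fun G C L w"
proof -
  have LC: "L \<subseteq> C \<times> C" and tr: "trans L"
    using po by (auto simp: partial_order_on_def preorder_on_def)
  obtain g where g: "\<forall>x\<in>C. g x \<in> carrier G"
    and wg: "\<And>x y. (x, y) \<in> hasse_arrows L \<Longrightarrow> w x y = g x \<otimes> inv (g y)"
    using triv unfolding trivial_fun_def by blast
  have cob: "g (fst a) \<in> carrier G \<and> g (snd a) \<in> carrier G
              \<and> w (fst a) (snd a) = g (fst a) \<otimes> inv (g (snd a))" if "a \<in> hasse_arrows L" for a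
  proof -
    have "fst a \<in> C" "snd a \<in> C" using that hasse_arrows_subset[of L] LC by (auto simp: mem_Times_iff)
    then show ?thesis using g wg[of "fst a" "snd a"] that by simp
  qed
  have "w x y = g x \<otimes> inv (g y)" if xy: "(x, y) \<in> L" for x y
  proof (cases "x = y")
    case True
    moreover have "x \<in> C" using xy LC by blast
    ultimately show ?thesis using transitive_fun_refl_one[OF w] xy g by (simp add: r_inv)
  next
    case False
    then have "(x, y) \<in> (hasse_arrows L)\<^sup>+" using xy trancl_hasse_arrows[OF fin po] by simp
    then obtain p where p: "is_path (hasse_arrows L) p" "path_start p = x" "path_end p = y"
      unfolding trancl_iff_path by blast
    have "w x y = path_prod G (\<lambda>a. w (fst a) (snd a)) p"
      using path_prod_transitive_fun[OF p(1) hasse_arrows_subset tr w] p by simp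
    also have "\<dots> = g x \<otimes> inv (g y)"
      using path_prod_coboundary[OF p(1) cob] p by simp
    finally show ?thesis .
  qed
  then show ?thesis using g unfolding trivial_fun_def by blast
qed

lemma (in group) transitive_funs_trivial_iff_path_independent_trivial:
  assumes fin: "finite L" and po: "partial_order_on C L"
  shows "(\<forall>w. transitive_fun G L w \<longrightarrow> trivial_fun G C L w) \<longleftrightarrow>
    (\<forall>v. path_independent G (hasse_arrows L) v \<longrightarrow> trivial_fun G C (hasse_arrows L) (curry v))"
proof (intro iffI allI impI)
  fix v assume all_trivial: "\<forall>w. transitive_fun G L w \<longrightarrow> trivial_fun G C L w"
    and "path_independent G (hasse_arrows L) v"
  then obtain w where w: "transitive_fun G L w" "\<And>a. a \<in> hasse_arrows L \<Longrightarrow> w (fst a) (snd a) = v a"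
    using path_independent_extends_to_transitive_fun[OF fin po] by blast
  then have "trivial_fun G C (hasse_arrows L) w"
    using all_trivial trivial_fun_subset[OF hasse_arrows_subset] by blast
  moreover have "curry v x y = w x y" if "(x, y) \<in> hasse_arrows L" for x y
    using w(2)[OF that] by simp
  ultimately show "trivial_fun G C (hasse_arrows L) (curry v)"
    by (rule trivial_fun_eq_onI)
next
  fix w assume all_trivial: "\<forall>v. path_independent G (hasse_arrows L) v
                               \<longrightarrow> trivial_fun G C (hasse_arrows L) (curry v)"
    and w: "transitive_fun G L w"
  have "path_independent G (hasse_arrows L) (\<lambda>a. w (fst a) (snd a))"
    using w po by (intro path_independent_transitive_fun) (auto simp: partial_order_on_def preorder_on_def)
  moreover have "curry (\<lambda>a. w (fst a) (snd a)) = w" by (intro ext) simp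
  ultimately have "trivial_fun G C (hasse_arrows L) w"
    using all_trivial by metis
  then show "trivial_fun G C L w"
    using trivial_fun_if_trivial_on_hasse_arrows[OF fin po w] by blast
qed

definition cls_rep :: "nat \<Rightarrow> (nat \<times> nat) set \<Rightarrow> nat set \<Rightarrow> nat" where
  "cls_rep n rho = inv_into {1..n} (cls n rho)"

lemma cls_rep:
  assumes "\<alpha> \<in> classesC n rho"
  shows "cls_rep n rho \<alpha> \<in> {1..n}" "cls n rho (cls_rep n rho \<alpha>) = \<alpha>"
proof -
  have "\<alpha> \<in> cls n rho ` {1..n}" using assms by (simp add: classesC_def)
  then show "cls_rep n rho \<alpha> \<in> {1..n}" "cls n rho (cls_rep n rho \<alpha>) = \<alpha>"
    unfolding cls_rep_def by (rule inv_into_into, rule f_inv_into_f)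
qed

lemma cls_in_classesC: "i \<in> {1..n} \<Longrightarrow> cls n rho i \<in> classesC n rho"
  by (simp add: classesC_def)

lemma cls_le_subset: "cls_le n rho \<subseteq> classesC n rho \<times> classesC n rho"
  unfolding cls_le_def classesC_def by auto

context
  fixes n :: nat and rho :: "(nat \<times> nat) set"
  assumes rho: "preorder_on {1..n} rho"
begin

lemma cls_eq_iff:
  assumes "i \<in> {1..n}" "j \<in> {1..n}"
  shows "cls n rho i = cls n rho j \<longleftrightarrow> (i, j) \<in> rho \<and> (j, i) \<in> rho"
proof
  assume "cls n rho i = cls n rho j"
  moreover have "i \<in> cls n rho i" using rho assms by (simp add: cls_def preorder_on_def refl_on_def)
  ultimately show "(i, j) \<in> rho \<and> (j, i) \<in> rho" by (simp add: cls_def)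
next
  assume "(i, j) \<in> rho \<and> (j, i) \<in> rho"
  then show "cls n rho i = cls n rho j"
    using rho unfolding cls_def preorder_on_def by (auto dest: transD)
qed

lemma cls_le_iff:
  assumes "i \<in> {1..n}" "j \<in> {1..n}"
  shows "(cls n rho i, cls n rho j) \<in> cls_le n rho \<longleftrightarrow> (i, j) \<in> rho"
proof
  assume "(cls n rho i, cls n rho j) \<in> cls_le n rho"
  then obtain i' j' where "i' \<in> {1..n}" "j' \<in> {1..n}" "(i', j') \<in> rho"
    and "cls n rho i = cls n rho i'" "cls n rho j = cls n rho j'"
    unfolding cls_le_def by auto
  then show "(i, j) \<in> rho"
    using rho cls_eq_iff assms unfolding preorder_on_def by (meson transD)
qed (use assms in \<open>auto simp: cls_le_def\<close>)

lemma cls_mono: "(i, j) \<in> rho \<Longrightarrow> (cls n rho i, cls n rho j) \<in> cls_le n rho"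
  using rho cls_le_iff[of i j] by (auto simp: preorder_on_def)

lemma cls_rep_mono:
  assumes "(\<alpha>, \<beta>) \<in> cls_le n rho"
  shows "(cls_rep n rho \<alpha>, cls_rep n rho \<beta>) \<in> rho"
proof -
  have "\<alpha> \<in> classesC n rho" "\<beta> \<in> classesC n rho" using assms cls_le_subset by blast+
  then show ?thesis
    using assms cls_rep cls_le_iff[of "cls_rep n rho \<alpha>" "cls_rep n rho \<beta>"] by simp
qed

lemma cls_rep_cls_equiv:
  assumes "i \<in> {1..n}"
  shows "(i, cls_rep n rho (cls n rho i)) \<in> rho \<and> (cls_rep n rho (cls n rho i), i) \<in> rho"
  using cls_rep[OF cls_in_classesC[OF assms]] cls_eq_iff[OF assms, of "cls_rep n rho (cls n rho i)"]
  by simp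

lemma partial_order_on_cls_le: "partial_order_on (classesC n rho) (cls_le n rho)"
  unfolding partial_order_on_def preorder_on_def
proof (intro conjI cls_le_subset)
  show "refl_on (classesC n rho) (cls_le n rho)"
    using rho unfolding refl_on_def classesC_def cls_le_def preorder_on_def by blast
  show "trans (cls_le n rho)"
  proof (rule transI)
    fix \<alpha> \<beta> \<gamma> assume "(\<alpha>, \<beta>) \<in> cls_le n rho" "(\<beta>, \<gamma>) \<in> cls_le n rho"
    then obtain i j j' k where "i \<in> {1..n}" "j \<in> {1..n}" "j' \<in> {1..n}" "k \<in> {1..n}"
      and "\<alpha> = cls n rho i" "\<beta> = cls n rho j" "\<beta> = cls n rho j'" "\<gamma> = cls n rho k"
      and "(i, j) \<in> rho" "(j', k) \<in> rho"
      unfolding cls_le_def by blast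
    moreover have "trans rho" using rho by (simp add: preorder_on_def)
    ultimately show "(\<alpha>, \<gamma>) \<in> cls_le n rho"
      using cls_eq_iff[of j j'] cls_le_iff[of i k] by (metis transD)
  qed
  show "antisym (cls_le n rho)"
  proof (rule antisymI)
    fix \<alpha> \<beta> assume le: "(\<alpha>, \<beta>) \<in> cls_le n rho" "(\<beta>, \<alpha>) \<in> cls_le n rho"
    then obtain i j where "i \<in> {1..n}" "j \<in> {1..n}" "\<alpha> = cls n rho i" "\<beta> = cls n rho j"
      unfolding cls_le_def by blast
    with le show "\<alpha> = \<beta>" using cls_le_iff cls_eq_iff by blast
  qed
qed

lemma finite_cls_le: "finite (cls_le n rho)"
  using finite_subset[OF cls_le_subset] by (simp add: classesC_def)

end

lemma (in group) transitive_funs_trivial_iff_on_classes: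
  assumes rho: "preorder_on {1..n} rho"
  shows "(\<forall>u. transitive_fun G rho u \<longrightarrow> trivial_fun G {1..n} rho u) \<longleftrightarrow>
    (\<forall>w. transitive_fun G (cls_le n rho) w \<longrightarrow> trivial_fun G (classesC n rho) (cls_le n rho) w)"
proof (intro iffI allI impI)
  let ?r = "cls_rep n rho" and ?cls = "cls n rho"
  have rep_into: "?r ` classesC n rho \<subseteq> {1..n}" using cls_rep by blast
  fix w assume all_trivial: "\<forall>u. transitive_fun G rho u \<longrightarrow> trivial_fun G {1..n} rho u"
    and w: "transitive_fun G (cls_le n rho) w"
  have "trivial_fun G {1..n} rho (\<lambda>i j. w (?cls i) (?cls j))"
    by (rule all_trivial[rule_format, OF transitive_fun_comp[OF w cls_mono[OF rho]]])
  then have "trivial_fun G (classesC n rho) (cls_le n rho)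
              (\<lambda>\<alpha> \<beta>. w (?cls (?r \<alpha>)) (?cls (?r \<beta>)))"
    by (rule trivial_fun_comp[where u = "\<lambda>i j. w (?cls i) (?cls j)",
          OF _ rep_into cls_rep_mono[OF rho]])
  moreover have "w \<alpha> \<beta> = w (?cls (?r \<alpha>)) (?cls (?r \<beta>))"
    if "(\<alpha>, \<beta>) \<in> cls_le n rho" for \<alpha> \<beta>
  proof -
    have "\<alpha> \<in> classesC n rho" "\<beta> \<in> classesC n rho" using that cls_le_subset by blast+
    then show ?thesis by (simp add: cls_rep)
  qed
  ultimately show "trivial_fun G (classesC n rho) (cls_le n rho) w"
    by (rule trivial_fun_eq_onI)
next
  let ?r = "cls_rep n rho" and ?cls = "cls n rho"
  have cls_into: "?cls ` {1..n} \<subseteq> classesC n rho" using cls_in_classesC by blast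
  fix u assume all_trivial: "\<forall>w. transitive_fun G (cls_le n rho) w
                               \<longrightarrow> trivial_fun G (classesC n rho) (cls_le n rho) w"
    and u: "transitive_fun G rho u"
  have "trivial_fun G (classesC n rho) (cls_le n rho) (\<lambda>\<alpha> \<beta>. u (?r \<alpha>) (?r \<beta>))"
    by (rule all_trivial[rule_format, OF transitive_fun_comp[OF u cls_rep_mono[OF rho]]])
  then have "trivial_fun G {1..n} rho (\<lambda>i j. u (?r (?cls i)) (?r (?cls j)))"
    by (rule trivial_fun_comp[OF _ cls_into cls_mono[OF rho]])
  then show "trivial_fun G {1..n} rho u"
    using cls_rep_cls_equiv[OF rho] by (intro trivial_fun_if_trivial_on_representatives[OF u rho])
qed

theorem proposition5p4:
  fixes G :: "('g, 'b) monoid_scheme"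
    and n :: nat and rho :: "(nat \<times> nat) set"
  assumes "group G"
    and "preorder_on {1..n} rho"
  shows "((\<forall>u. transitive_fun G rho u \<longrightarrow> trivial_fun G {1..n} rho u)
          \<longleftrightarrow> (\<forall>w. transitive_fun G (cls_le n rho) w
                     \<longrightarrow> trivial_fun G (classesC n rho) (cls_le n rho) w))
       \<and> ((\<forall>w. transitive_fun G (cls_le n rho) w
                     \<longrightarrow> trivial_fun G (classesC n rho) (cls_le n rho) w)
          \<longleftrightarrow> (\<forall>v. (\<forall>a \<in> hasse_arrows (cls_le n rho). v a \<in> carrier G) \<and>
                     (\<forall>p q. is_path (hasse_arrows (cls_le n rho)) p
                          \<longrightarrow> is_path (hasse_arrows (cls_le n rho)) q
                          \<longrightarrow> path_start p = path_start q \<longrightarrow> path_end p = path_end q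
                          \<longrightarrow> path_prod G v p = path_prod G v q)
                   \<longrightarrow> (\<exists>f. (\<forall>\<alpha> \<in> classesC n rho. f \<alpha> \<in> carrier G) \<and>
                            (\<forall>a \<in> hasse_arrows (cls_le n rho).
                               v a = f (fst a) \<otimes>\<^bsub>G\<^esub> inv\<^bsub>G\<^esub> (f (snd a))))))"
proof -
  interpret group G by fact
  show ?thesis
    using transitive_funs_trivial_iff_on_classes[OF assms(2)]
      transitive_funs_trivial_iff_path_independent_trivial
        [OF finite_cls_le[OF assms(2)] partial_order_on_cls_le[OF assms(2)]]
    unfolding path_independent_def trivial_fun_curry_iff by blast
qed

end
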